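(* Let $X=\prod_{i=1}^d X_i$ and let $f,g$, $x^*_\eta$, the probabilities $p_1,\dots,p_d$, the constants $C_f,C_g$, the function $\mathcal L$ and the RB-IRG iterates $\{x_k\}$ be as described in the context. Let $\{\gamma_k\}$ and $\{\eta_k\}$ be positive, non-increasing sequences with $\gamma_0\eta_0<\frac{1}{\mu\, p_{\min}}$. Then for every $k\ge 1$, $$\mathbb E\big[\mathcal L(x_{k+1},x^*_{\eta_k})\,\big|\,\mathcal F_k\big]\le \big(1-\mu\gamma_k\eta_k p_{\min}\big)\mathcal L(x_k,x^*_{\eta_{k-1}})+\frac{2C_g^2}{p_{\min}^2\mu^3\gamma_k\eta_k}\Big(\frac{\eta_{k-1}}{\eta_k}-1\Big)^2+2\gamma_k^2\big(C_f^2+\eta_0^2C_g^2\big).$$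
   Context: $X=\prod_{i=1}^d X_i$ with each $X_i\subseteq\mathbb R^{n_i}$ nonempty, closed and convex, $\sum_i n_i=n$; for $x\in\mathbb R^n$, $x^{(i)}$ denotes its $i$-th block. $f,g:\mathbb R^n\to(-\infty,\infty]$ are proper convex (possibly nondifferentiable) functions, $g$ is $\mu$-strongly convex with $\mu>0$, and $X\subseteq\operatorname{int}(\operatorname{dom} f\cap\operatorname{dom} g)$. For $\eta>0$, $x^*_\eta$ denotes the unique minimizer of $f+\eta g$ over $X$. For $x\in X$, $\tilde\nabla f(x)\in\partial f(x)$ and $\tilde\nabla g(x)\in\partial g(x)$ are the subgradients used by the algorithm, and $\tilde\nabla_i f(x),\tilde\nabla_i g(x)$ their $i$-th blocks; there are constants $C_{f,i},C_{g,i}$ with $\|\tilde\nabla_i f(x)\|\le C_{f,i}$, $\|\tilde\nabla_i g(x)\|\le C_{g,i}$ for all $x\in X$, and $C_f=\sqrt{\sum_i C_{f,i}^2}$, $C_g=\sqrt{\sum_i C_{g,i}^2}$. Probabilities $p_1,\dots,p_d>0$ with $\sum_i p_i=1$; $p_{\min}=\min_i p_i$, $p_{\max}=\max_i p_i$. Algorithm RB-IRG: given $x_0\in X$, positive stepsizes $\gamma_k$, regularization parameters $\eta_k$ and a scalar $r$, set $S_0=\gamma_0^r$, $\bar x_0=x_0$; for $k=0,1,\dots$: draw $i_k\in\{1,\dots,d\}$ i.i.d. with $\mathrm{Prob}(i_k=i)=p_i$; set $x_{k+1}^{(i_k)}=\Pi_{X_{i_k}}\big(x_k^{(i_k)}-\gamma_k(\tilde\nabla_{i_k}f(x_k)+\eta_k\tilde\nabla_{i_k}g(x_k))\big)$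 (Euclidean projection) and $x_{k+1}^{(i)}=x_k^{(i)}$ for $i\ne i_k$; set $S_{k+1}=S_k+\gamma_{k+1}^r$, $\bar x_{k+1}=(S_k\bar x_k+\gamma_{k+1}^r x_{k+1})/S_{k+1}$. $\mathcal F_k$ denotes the information $\{i_0,\dots,i_{k-1}\}$ (conditioning is on the $\sigma$-algebra they generate). For $x,y\in\mathbb R^n$, $\mathcal L(x,y)=\sum_{i=1}^d p_i^{-1}\|x^{(i)}-y^{(i)}\|^2$. *)

theory Defs
  imports "HOL-Analysis.Analysis" "HOL-Probability.Probability"
begin

text \<open>Coordinates of R^n are indexed by a finite type 'c; the block structure is a map
  blk from coordinates to block indices 'b (the d blocks). The i-th block x^(i) of x is
  represented inside R^n by zeroing all coordinates outside block i.\<close>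

definition blockp :: "('c \<Rightarrow> 'b) \<Rightarrow> 'b \<Rightarrow> real^'c \<Rightarrow> real^'c" where
  "blockp blk i x = (\<chi> c. if blk c = i then x $ c else 0)"

text \<open>The product set X = X_1 x ... x X_d, each X_i a set of vectors supported on block i.\<close>
definition prodset :: "('c \<Rightarrow> 'b) \<Rightarrow> ('b \<Rightarrow> (real^'c) set) \<Rightarrow> (real^'c) set" where
  "prodset blk Xs = {x. \<forall>i. blockp blk i x \<in> Xs i}"

definition edom :: "('a \<Rightarrow> ereal) \<Rightarrow> 'a set" where
  "edom f = {x. f x < \<infinity>}"

definition proper_fun :: "('a \<Rightarrow> ereal) \<Rightarrow> bool" where
  "proper_fun f \<longleftrightarrow> (\<forall>x. f x \<noteq> -\<infinity>) \<and> edom f \<noteq> {}"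

definition econvex :: "('a::real_vector \<Rightarrow> ereal) \<Rightarrow> bool" where
  "econvex f \<longleftrightarrow> convex (edom f) \<and> convex_on (edom f) (\<lambda>x. real_of_ereal (f x))"

definition estrongly_convex :: "real \<Rightarrow> ('a::real_normed_vector \<Rightarrow> ereal) \<Rightarrow> bool" where
  "estrongly_convex \<mu> g \<longleftrightarrow> convex (edom g) \<and>
     convex_on (edom g) (\<lambda>x. real_of_ereal (g x) - \<mu> / 2 * (norm x)\<^sup>2)"

definition subdiff :: "('a::real_inner \<Rightarrow> ereal) \<Rightarrow> 'a \<Rightarrow> 'a set" where
  "subdiff f x = {s. \<forall>y. ereal (real_of_ereal (f x) + inner s (y - x)) \<le> f y}"

definition regmin :: "('a \<Rightarrow> ereal) \<Rightarrow> ('a \<Rightarrow> ereal) \<Rightarrow> 'a set \<Rightarrow> real \<Rightarrow> 'a" where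
  "regmin f g X eta = (THE z. z \<in> X \<and> (\<forall>y\<in>X. f z + ereal eta * g z \<le> f y + ereal eta * g y))"

definition Lfun :: "('c \<Rightarrow> 'b::finite) \<Rightarrow> ('b \<Rightarrow> real) \<Rightarrow> real^'c \<Rightarrow> real^'c \<Rightarrow> real" where
  "Lfun blk p x y = (\<Sum>i\<in>UNIV. (1 / p i) * (norm (blockp blk i (x - y)))\<^sup>2)"

definition rb_step :: "('c \<Rightarrow> 'b) \<Rightarrow> ('b \<Rightarrow> (real^'c) set) \<Rightarrow> (real^'c \<Rightarrow> real^'c) \<Rightarrow>
    (real^'c \<Rightarrow> real^'c) \<Rightarrow> real \<Rightarrow> real \<Rightarrow> 'b \<Rightarrow> real^'c \<Rightarrow> real^'c" where
  "rb_step blk Xs gf gg gam eta i x =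
     x - blockp blk i x
       + closest_point (Xs i) (blockp blk i (x - gam *\<^sub>R (gf x + eta *\<^sub>R gg x)))"

text \<open>The iterates x_k as functions of the sequence of sampled indices omega = (i_0, i_1, ...).\<close>
primrec rb_iter :: "('c \<Rightarrow> 'b) \<Rightarrow> ('b \<Rightarrow> (real^'c) set) \<Rightarrow> (real^'c \<Rightarrow> real^'c) \<Rightarrow>
    (real^'c \<Rightarrow> real^'c) \<Rightarrow> (nat \<Rightarrow> real) \<Rightarrow> (nat \<Rightarrow> real) \<Rightarrow> real^'c \<Rightarrow> (nat \<Rightarrow> 'b) \<Rightarrow> nat \<Rightarrow> real^'c" where
  "rb_iter blk Xs gf gg gam eta x0 \<omega> 0 = x0"
| "rb_iter blk Xs gf gg gam eta x0 \<omega> (Suc k) =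
     rb_step blk Xs gf gg (gam k) (eta k) (\<omega> k) (rb_iter blk Xs gf gg gam eta x0 \<omega> k)"

text \<open>Probability space of i.i.d. index sequences with law P, and the filtration
  F_k = sigma(i_0, ..., i_{k-1}).\<close>
definition idx_space :: "'b pmf \<Rightarrow> (nat \<Rightarrow> 'b) measure" where
  "idx_space P = PiM UNIV (\<lambda>_. measure_pmf P)"

definition idx_filt :: "'b pmf \<Rightarrow> nat \<Rightarrow> (nat \<Rightarrow> 'b) measure" where
  "idx_filt P k = vimage_algebra (space (idx_space P)) (\<lambda>\<omega>. restrict \<omega> {..<k})
                     (PiM {..<k} (\<lambda>_. measure_pmf P))"

end

theory Submission
  imports Defs
begin

text \<open>Given the first k indices, the conditional expectation of L(x_{k+1}, .) is the
  p-weighted average over the block drawn at step k. These weights cancel the weights 1/p_i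
  of L, so the average changes L exactly as the full projected subgradient step changes the
  squared Euclidean distance, and the blockwise projection is nonexpansive. Strong convexity of
  f + eta_k g then contracts the distance of x_k to the minimizer x*_{eta_k} by the factor
  1 - 2 mu gamma_k eta_k p_min, up to the squared length of the step. Finally, Young's
  inequality with weight c = mu gamma_k eta_k p_min moves the reference point to
  x*_{eta_{k-1}} at the price of half of the contraction and of
  |x*_{eta_{k-1}} - x*_{eta_k}|^2 / (c p_min), and comparing the optimality of the two
  minimizers bounds that distance by (C_g / mu) (eta_{k-1} / eta_k - 1).\<close>

section \<open>Conditional expectation given the first indices\<close>

lemma sets_PiM_pmf_finite:
  fixes P :: "'b::countable pmf"
  assumes "finite J"
  shows "sets (PiM J (\<lambda>_. measure_pmf P)) = Pow (space (PiM J (\<lambda>_. measure_pmf P)))"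
proof -
  let ?M = "PiM J (\<lambda>_. measure_pmf P)"
  have "A \<in> sets ?M" if A: "A \<subseteq> space ?M" for A
  proof -
    have "countable (space ?M)"
      using assms by (simp add: space_PiM countable_PiE)
    then have "countable A"
      using A countable_subset by blast
    moreover have "{w} \<in> sets ?M" if "w \<in> A" for w
    proof -
      have "w \<in> extensional J"
        using that A by (auto simp: space_PiM PiE_iff)
      then show ?thesis
        using assms sets_PiM_I_finite[of J "\<lambda>j. {w j}"] by (simp add: PiE_singleton)
    qed
    ultimately show ?thesis
      using sets.countable_UN''[of A "\<lambda>w. {w}"] by simp
  qed
  then show ?thesis
    using sets.sets_into_space by blast
qed

lemma measurable_PiM_pmf_finite:
  fixes P :: "'b::countable pmf"
  assumes "finite J"
  shows "F \<in> measurable (PiM J (\<lambda>_. measure_pmf P)) N \<longleftrightarrow> F \<in> space (PiM J (\<lambda>_. measure_pmf P)) \<rightarrow> space N"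
proof -
  have "measurable (PiM J (\<lambda>_. measure_pmf P)) N
      = measurable (count_space (space (PiM J (\<lambda>_. measure_pmf P)))) N"
    by (rule measurable_cong_sets) (simp_all add: sets_PiM_pmf_finite[OF assms])
  then show ?thesis
    by simp
qed

lemma integrable_PiM_pmf_finite:
  fixes P :: "'b::finite pmf" and F :: "('i \<Rightarrow> 'b) \<Rightarrow> real"
  assumes "finite J"
  shows "integrable (PiM J (\<lambda>_. measure_pmf P)) F"
proof -
  let ?M = "PiM J (\<lambda>_. measure_pmf P)"
  interpret prob_space ?M
    by (intro prob_space_PiM) (simp add: prob_space_measure_pmf)
  have "finite (space ?M)"
    using assms by (simp add: space_PiM finite_PiE)
  then have "AE w in ?M. norm (F w) \<le> Max ((\<lambda>w. norm (F w)) ` space ?M)"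
    by (intro AE_I2) simp
  moreover have "F \<in> borel_measurable ?M"
    by (simp add: measurable_PiM_pmf_finite[OF assms])
  ultimately show ?thesis
    by (rule integrable_const_bound)
qed

lemma space_idx_space [simp]: "space (idx_space P) = UNIV"
  by (simp add: idx_space_def space_PiM)

lemma prob_space_idx_space: "prob_space (idx_space P)"
  unfolding idx_space_def by (intro prob_space_PiM) (simp add: prob_space_measure_pmf)

lemma measurable_restrict_idx_space:
  "(\<lambda>\<omega>. restrict \<omega> J) \<in> measurable (idx_space P) (PiM J (\<lambda>_. measure_pmf P))"
  unfolding idx_space_def by (rule measurable_restrict_subset) simp

lemma
  fixes P :: "'b::finite pmf" and F :: "(nat \<Rightarrow> 'b) \<Rightarrow> real"
  assumes "finite J"
  shows integrable_idx_space_restrict: "integrable (idx_space P) (\<lambda>\<omega>. F (restrict \<omega> J))"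
    and integral_idx_space_restrict:
      "(\<integral>\<omega>. F (restrict \<omega> J) \<partial>idx_space P) = integral\<^sup>L (PiM J (\<lambda>_. measure_pmf P)) F"
proof -
  interpret product_prob_space "\<lambda>_. measure_pmf P" UNIV
    by unfold_locales
  have F: "F \<in> borel_measurable (PiM J (\<lambda>_. measure_pmf P))"
    by (simp add: measurable_PiM_pmf_finite[OF assms])
  have distr: "distr (idx_space P) (PiM J (\<lambda>_. measure_pmf P)) (\<lambda>\<omega>. restrict \<omega> J)
      = PiM J (\<lambda>_. measure_pmf P)"
    unfolding idx_space_def using assms by (intro distr_PiM_restrict_finite) auto
  show "integrable (idx_space P) (\<lambda>\<omega>. F (restrict \<omega> J))"
    using integrable_distr_eq[OF measurable_restrict_idx_space F] distr
      integrable_PiM_pmf_finite[OF assms, of P F]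
    by simp
  show "(\<integral>\<omega>. F (restrict \<omega> J) \<partial>idx_space P) = integral\<^sup>L (PiM J (\<lambda>_. measure_pmf P)) F"
    using integral_distr[OF measurable_restrict_idx_space F] distr by simp
qed

lemma sets_idx_filt:
  "sets (idx_filt P k)
     = {(\<lambda>\<omega>. restrict \<omega> {..<k}) -` A | A. A \<in> sets (PiM {..<k} (\<lambda>_. measure_pmf P))}"
  unfolding idx_filt_def by (subst sets_vimage_algebra2) (auto simp: space_PiM)

lemma sigma_finite_subalgebra_idx_filt: "sigma_finite_subalgebra (idx_space P) (idx_filt P k)"
proof -
  interpret prob_space "idx_space P"
    by (rule prob_space_idx_space)
  have "sets (idx_filt P k) \<subseteq> sets (idx_space P)"
    using measurable_sets[OF measurable_restrict_idx_space] by (force simp: sets_idx_filt)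
  then have "subalgebra (idx_space P) (idx_filt P k)"
    by (simp add: subalgebra_def idx_filt_def)
  then interpret finite_measure_subalgebra "idx_space P" "idx_filt P k"
    by unfold_locales
  show ?thesis
    by unfold_locales
qed

lemma measurable_idx_filt:
  fixes P :: "'b::finite pmf" and H :: "(nat \<Rightarrow> 'b) \<Rightarrow> real"
  assumes "\<And>\<omega> \<omega>'. (\<And>j. j < k \<Longrightarrow> \<omega> j = \<omega>' j) \<Longrightarrow> H \<omega> = H \<omega>'"
  shows "H \<in> borel_measurable (idx_filt P k)"
proof -
  have "(\<lambda>\<omega>. restrict \<omega> {..<k}) \<in> measurable (idx_filt P k) (PiM {..<k} (\<lambda>_. measure_pmf P))"
    unfolding idx_filt_def by (rule measurable_vimage_algebra1) (simp add: space_PiM)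
  moreover have "H \<in> borel_measurable (PiM {..<k} (\<lambda>_. measure_pmf P))"
    by (simp add: measurable_PiM_pmf_finite)
  ultimately have "(\<lambda>\<omega>. H (restrict \<omega> {..<k})) \<in> borel_measurable (idx_filt P k)"
    by (rule measurable_compose)
  moreover have "H (restrict \<omega> {..<k}) = H \<omega>" for \<omega>
    by (rule assms) simp
  ultimately show ?thesis
    by simp
qed

lemma set_integral_idx_filt_average:
  fixes P :: "'b::finite pmf" and W :: "(nat \<Rightarrow> 'b) \<Rightarrow> real"
  assumes W: "\<And>\<omega> \<omega>'. (\<And>j. j \<le> k \<Longrightarrow> \<omega> j = \<omega>' j) \<Longrightarrow> W \<omega> = W \<omega>'"
    and "A \<in> sets (idx_filt P k)"
  shows "(\<integral>\<omega>\<in>A. W \<omega> \<partial>idx_space P)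
       = (\<integral>\<omega>\<in>A. (\<Sum>i\<in>UNIV. pmf P i * W (fun_upd \<omega> k i)) \<partial>idx_space P)"
proof -
  interpret product_prob_space "\<lambda>_. measure_pmf P" UNIV
    by unfold_locales
  define H where "H \<omega> = (\<Sum>i\<in>UNIV. pmf P i * W (fun_upd \<omega> k i))" for \<omega>
  have W_restrict: "W \<omega> = W (restrict \<omega> (insert k {..<k}))" for \<omega>
    by (rule W) auto
  have H_restrict: "H \<omega> = H (restrict \<omega> {..<k})" for \<omega>
    unfolding H_def by (intro sum.cong refl arg_cong2[where f = "(*)"] W) auto
  obtain B where B: "B \<in> sets (PiM {..<k} (\<lambda>_. measure_pmf P))"
    and A: "A = (\<lambda>\<omega>. restrict \<omega> {..<k}) -` B"
    using \<open>A \<in> sets (idx_filt P k)\<close> by (auto simp: sets_idx_filt)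
  define G where "G \<omega> = indicator B (restrict \<omega> {..<k}) * W \<omega>" for \<omega> :: "nat \<Rightarrow> 'b"
  have "(\<integral>\<omega>\<in>A. W \<omega> \<partial>idx_space P) = (\<integral>\<omega>. G (restrict \<omega> (insert k {..<k})) \<partial>idx_space P)"
    unfolding set_lebesgue_integral_def G_def A
    by (intro Bochner_Integration.integral_cong) (simp_all add: indicator_def flip: W_restrict)
  also have "\<dots> = integral\<^sup>L (PiM (insert k {..<k}) (\<lambda>_. measure_pmf P)) G"
    by (simp add: integral_idx_space_restrict)
  also have "\<dots> = (\<integral>x. (\<integral>y. G (x(k := y)) \<partial>measure_pmf P) \<partial>PiM {..<k} (\<lambda>_. measure_pmf P))"
    by (rule product_integral_insert) (simp_all add: integrable_PiM_pmf_finite)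
  also have "\<dots> = (\<integral>x. indicator B x * H x \<partial>PiM {..<k} (\<lambda>_. measure_pmf P))"
  proof (intro Bochner_Integration.integral_cong refl)
    fix x assume "x \<in> space (PiM {..<k} (\<lambda>_. measure_pmf P))"
    then have "restrict (x(k := y)) {..<k} = x" for y
      by (auto simp: space_PiM PiE_def extensional_def fun_eq_iff)
    then show "(\<integral>y. G (x(k := y)) \<partial>measure_pmf P) = indicator B x * H x"
      by (simp add: integral_measure_pmf[of UNIV] G_def H_def sum_distrib_left mult_ac)
  qed
  also have "\<dots> = (\<integral>\<omega>. indicator B (restrict \<omega> {..<k}) * H (restrict \<omega> {..<k}) \<partial>idx_space P)"
    using integral_idx_space_restrict[of "{..<k}" P "\<lambda>x. indicator B x * H x"] by simp
  also have "\<dots> = (\<integral>\<omega>\<in>A. H \<omega> \<partial>idx_space P)"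
    unfolding set_lebesgue_integral_def A
    by (intro Bochner_Integration.integral_cong) (simp_all add: indicator_def flip: H_restrict)
  finally show ?thesis
    unfolding H_def .
qed

lemma real_cond_exp_idx_filt:
  fixes P :: "'b::finite pmf" and W :: "(nat \<Rightarrow> 'b) \<Rightarrow> real"
  assumes W: "\<And>\<omega> \<omega>'. (\<And>j. j \<le> k \<Longrightarrow> \<omega> j = \<omega>' j) \<Longrightarrow> W \<omega> = W \<omega>'"
  shows "AE \<omega> in idx_space P.
           real_cond_exp (idx_space P) (idx_filt P k) W \<omega> = (\<Sum>i\<in>UNIV. pmf P i * W (fun_upd \<omega> k i))"
proof -
  interpret sigma_finite_subalgebra "idx_space P" "idx_filt P k"
    by (rule sigma_finite_subalgebra_idx_filt)
  define H where "H \<omega> = (\<Sum>i\<in>UNIV. pmf P i * W (fun_upd \<omega> k i))" for \<omega>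
  have H_dep: "H \<omega> = H \<omega>'" if "\<And>j. j < k \<Longrightarrow> \<omega> j = \<omega>' j" for \<omega> \<omega>'
    unfolding H_def using that by (intro sum.cong refl arg_cong2[where f = "(*)"] W) auto
  have W_restrict: "W \<omega> = W (restrict \<omega> {..k})" for \<omega>
    by (rule W) simp
  have H_restrict: "H \<omega> = H (restrict \<omega> {..<k})" for \<omega>
    by (rule H_dep) simp
  have W_int: "integrable (idx_space P) W"
    using integrable_idx_space_restrict[of "{..k}" P W] by (simp flip: W_restrict)
  have H_int: "integrable (idx_space P) H"
    using integrable_idx_space_restrict[of "{..<k}" P H] by (simp flip: H_restrict)
  have H_meas: "H \<in> borel_measurable (idx_filt P k)"
    using H_dep by (rule measurable_idx_filt)
  have "AE \<omega> in idx_space P. real_cond_exp (idx_space P) (idx_filt P k) W \<omega> = H \<omega>"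
  proof (rule real_cond_exp_charact[OF _ W_int H_int H_meas])
    fix A assume "A \<in> sets (idx_filt P k)"
    then show "(\<integral>\<omega>\<in>A. W \<omega> \<partial>idx_space P) = (\<integral>\<omega>\<in>A. H \<omega> \<partial>idx_space P)"
      unfolding H_def by (rule set_integral_idx_filt_average[rotated]) (fact W)
  qed
  then show ?thesis
    by (simp add: H_def)
qed

lemma Min_range_pmf:
  fixes P :: "'b::finite pmf"
  assumes "\<And>i. pmf P i > 0"
  shows "0 < Min (range (pmf P))" and "Min (range (pmf P)) \<le> pmf P i"
  using assms by (simp_all add: Min_gr_iff)

section \<open>Strong convexity\<close>

lemma power2_norm_add_le:
  fixes a b :: "'a::real_inner"
  assumes "c > 0"
  shows "(norm (a + b))\<^sup>2 \<le> (1 + c) * (norm a)\<^sup>2 + (1 + 1 / c) * (norm b)\<^sup>2"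
proof -
  have "0 \<le> (c * norm a - norm b)\<^sup>2 / c"
    using assms by simp
  also have "\<dots> = c * (norm a)\<^sup>2 - 2 * (norm a * norm b) + (norm b)\<^sup>2 / c"
    using assms by (simp add: power2_eq_square field_simps)
  finally have "2 * (norm a * norm b) \<le> c * (norm a)\<^sup>2 + (norm b)\<^sup>2 / c"
    by linarith
  moreover have "(norm (a + b))\<^sup>2 = (norm a)\<^sup>2 + 2 * inner a b + (norm b)\<^sup>2"
    by (simp add: power2_norm_eq_inner inner_add_left inner_add_right inner_commute)
  moreover have "inner a b \<le> norm a * norm b"
    by (rule norm_cauchy_schwarz)
  ultimately show ?thesis
    by (simp add: algebra_simps)
qed

lemma strongly_convex_onD:
  fixes \<phi> :: "'a::real_inner \<Rightarrow> real"
  assumes "convex_on S (\<lambda>x. \<phi> x - m / 2 * (norm x)\<^sup>2)" and "x \<in> S" "y \<in> S" "0 \<le> t" "t \<le> 1"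
  shows "\<phi> ((1 - t) *\<^sub>R x + t *\<^sub>R y)
           \<le> (1 - t) * \<phi> x + t * \<phi> y - m / 2 * t * (1 - t) * (norm (y - x))\<^sup>2"
proof -
  define w where "w = (1 - t) *\<^sub>R x + t *\<^sub>R y"
  have norm_w: "(norm w)\<^sup>2 = (1 - t) * (norm x)\<^sup>2 + t * (norm y)\<^sup>2 - t * (1 - t) * (norm (y - x))\<^sup>2"
    unfolding w_def
    by (simp add: power2_norm_eq_inner inner_add_left inner_add_right inner_diff_left
        inner_diff_right inner_commute algebra_simps)
  have "\<phi> w = (\<phi> w - m / 2 * (norm w)\<^sup>2) + m / 2 * (norm w)\<^sup>2"
    by simp
  also have "\<dots> \<le> (1 - t) * (\<phi> x - m / 2 * (norm x)\<^sup>2) + t * (\<phi> y - m / 2 * (norm y)\<^sup>2)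
                  + m / 2 * (norm w)\<^sup>2"
    using convex_onD[OF assms(1,4,5,2,3)] unfolding w_def by simp
  also have "\<dots> = (1 - t) * \<phi> x + t * \<phi> y - m / 2 * t * (1 - t) * (norm (y - x))\<^sup>2"
    unfolding norm_w by (simp add: field_simps)
  finally show ?thesis
    unfolding w_def .
qed

text \<open>Quadratic growth at a minimizer and the strengthened subgradient inequality both follow by
  letting the chord parameter tend to 0 in the strong convexity inequality.\<close>

lemma strongly_convex_on_slope:
  fixes \<phi> :: "'a::real_inner \<Rightarrow> real"
  assumes cv: "convex_on S (\<lambda>x. \<phi> x - m / 2 * (norm x)\<^sup>2)" and x: "x \<in> S" and y: "y \<in> S"
    and slope: "\<And>t. 0 < t \<Longrightarrow> t < 1 \<Longrightarrow> \<phi> x + t * a \<le> \<phi> ((1 - t) *\<^sub>R x + t *\<^sub>R y)"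
  shows "a + m / 2 * (norm (y - x))\<^sup>2 \<le> \<phi> y - \<phi> x"
proof -
  define D where "D = m / 2 * (norm (y - x))\<^sup>2"
  have "a + D - t * D \<le> \<phi> y - \<phi> x" if t: "0 < t" "t < 1" for t
  proof -
    have "\<phi> x + t * a \<le> (1 - t) * \<phi> x + t * \<phi> y - t * (1 - t) * D"
      using slope[OF t] strongly_convex_onD[OF cv x y, of t] t by (simp add: D_def mult_ac)
    then have "t * (a + D - t * D) \<le> t * (\<phi> y - \<phi> x)"
      by (simp add: algebra_simps)
    then show ?thesis
      using t by simp
  qed
  then have "eventually (\<lambda>t. a + D - t * D \<le> \<phi> y - \<phi> x) (at_right 0)"
    using eventually_at_right_real[of 0 1] by (auto elim: eventually_mono)
  moreover have "((\<lambda>t. a + D - t * D) \<longlongrightarrow> a + D) (at_right 0)"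
    by (intro tendsto_eq_intros) auto
  ultimately show ?thesis
    unfolding D_def[symmetric] by (intro tendsto_le[OF _ tendsto_const]) auto
qed

lemma strongly_convex_on_min_growth:
  fixes \<phi> :: "'a::real_inner \<Rightarrow> real"
  assumes cv: "convex_on S (\<lambda>x. \<phi> x - m / 2 * (norm x)\<^sup>2)" and "z \<in> S" "x \<in> S"
    and min: "\<And>y. y \<in> S \<Longrightarrow> \<phi> z \<le> \<phi> y"
  shows "m / 2 * (norm (x - z))\<^sup>2 \<le> \<phi> x - \<phi> z"
proof -
  have "convex S"
    using cv by (simp add: convex_on_def)
  then have "\<phi> z + t * 0 \<le> \<phi> ((1 - t) *\<^sub>R z + t *\<^sub>R x)" if "0 < t" "t < 1" for t
    using that assms(2,3) by (simp add: min convexD)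
  then show ?thesis
    using strongly_convex_on_slope[OF cv assms(2,3), of 0] by simp
qed

lemma strongly_convex_on_subgradient:
  fixes \<phi> :: "'a::real_inner \<Rightarrow> real"
  assumes cv: "convex_on S (\<lambda>x. \<phi> x - m / 2 * (norm x)\<^sup>2)" and "x \<in> S" "y \<in> S"
    and sg: "\<And>w. w \<in> S \<Longrightarrow> \<phi> x + inner s (w - x) \<le> \<phi> w"
  shows "\<phi> x + inner s (y - x) + m / 2 * (norm (y - x))\<^sup>2 \<le> \<phi> y"
proof -
  have "convex S"
    using cv by (simp add: convex_on_def)
  moreover have "(1 - t) *\<^sub>R x + t *\<^sub>R y - x = t *\<^sub>R (y - x)" for t
    by (simp add: algebra_simps)
  ultimately have "\<phi> x + t * inner s (y - x) \<le> \<phi> ((1 - t) *\<^sub>R x + t *\<^sub>R y)" if "0 < t" "t < 1" for t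
    using that sg[of "(1 - t) *\<^sub>R x + t *\<^sub>R y"] assms(2,3) by (simp add: convexD)
  then show ?thesis
    using strongly_convex_on_slope[OF cv assms(2,3)] by force
qed

lemma strongly_convex_on_min_unique:
  fixes \<phi> :: "'a::real_inner \<Rightarrow> real"
  assumes cv: "convex_on S (\<lambda>x. \<phi> x - m / 2 * (norm x)\<^sup>2)" and "m > 0"
    and z1: "z1 \<in> S" "\<And>y. y \<in> S \<Longrightarrow> \<phi> z1 \<le> \<phi> y"
    and z2: "z2 \<in> S" "\<And>y. y \<in> S \<Longrightarrow> \<phi> z2 \<le> \<phi> y"
  shows "z1 = z2"
proof -
  have "m / 2 * (norm (z2 - z1))\<^sup>2 \<le> \<phi> z2 - \<phi> z1"
    using strongly_convex_on_min_growth[OF cv z1(1) z2(1) z1(2)] .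
  also have "\<dots> \<le> 0"
    using z1 z2 by (simp add: order_antisym)
  finally show ?thesis
    using \<open>m > 0\<close> by (simp add: mult_le_0_iff)
qed

lemma strongly_convex_on_attains_min:
  fixes \<phi> :: "'a::euclidean_space \<Rightarrow> real"
  assumes "closed S" "continuous_on S \<phi>" "m > 0"
    and cv: "convex_on S (\<lambda>x. \<phi> x - m / 2 * (norm x)\<^sup>2)"
    and x0: "x0 \<in> S" and sg: "\<And>w. w \<in> S \<Longrightarrow> \<phi> x0 + inner s (w - x0) \<le> \<phi> w"
  shows "\<exists>z\<in>S. \<forall>y\<in>S. \<phi> z \<le> \<phi> y"
proof -
  define K where "K = S \<inter> cball x0 (2 * norm s / m)"
  have "compact K"
    unfolding K_def using assms(1) by (intro closed_Int_compact compact_cball)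
  moreover have "x0 \<in> K"
    using x0 \<open>m > 0\<close> by (simp add: K_def)
  moreover have "continuous_on K \<phi>"
    using assms(2) by (rule continuous_on_subset) (simp add: K_def)
  ultimately obtain z where z: "z \<in> K" "\<And>y. y \<in> K \<Longrightarrow> \<phi> z \<le> \<phi> y"
    using continuous_attains_inf[of K \<phi>] by blast
  \<comment> \<open>Outside the ball the quadratic growth beats the linear decrease.\<close>
  have "\<phi> x0 \<le> \<phi> y" if y: "y \<in> S" "y \<notin> K" for y
  proof -
    define r where "r = norm (y - x0)"
    have "2 * norm s / m < r"
      using y by (simp add: K_def r_def dist_norm norm_minus_commute)
    then have "r * (2 * norm s) \<le> r * (m * r)"
      using \<open>m > 0\<close> by (intro mult_left_mono) (simp_all add: r_def field_simps)
    then have "norm s * r \<le> m / 2 * r\<^sup>2"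
      by (simp add: power2_eq_square algebra_simps)
    moreover have "- (norm s * r) \<le> inner s (y - x0)"
      using Cauchy_Schwarz_ineq2[of s "y - x0"] by (simp add: r_def)
    moreover have "\<phi> x0 + inner s (y - x0) + m / 2 * r\<^sup>2 \<le> \<phi> y"
      unfolding r_def using strongly_convex_on_subgradient[OF cv x0 y(1) sg] .
    ultimately show ?thesis
      by linarith
  qed
  then have "\<forall>y\<in>S. \<phi> z \<le> \<phi> y"
    using z \<open>x0 \<in> K\<close> by (meson order_trans)
  then show ?thesis
    using z(1) by (auto simp: K_def)
qed

section \<open>Blocks and the weighted distance\<close>

lemma blockp_nth: "blockp blk i x $ c = (if blk c = i then x $ c else 0)"
  by (simp add: blockp_def)

lemma blockp_add: "blockp blk i (x + y) = blockp blk i x + blockp blk i y"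
  and blockp_diff: "blockp blk i (x - y) = blockp blk i x - blockp blk i y"
  and blockp_scaleR: "blockp blk i (a *\<^sub>R x) = a *\<^sub>R blockp blk i x"
  and blockp_blockp: "blockp blk j (blockp blk i x) = (if i = j then blockp blk i x else 0)"
  by (auto simp: vec_eq_iff blockp_nth)

lemma linear_blockp: "linear (blockp blk i)"
  by (rule linearI) (simp_all add: blockp_add blockp_scaleR)

lemma power2_norm_eq_sum_blockp:
  fixes blk :: "'c::finite \<Rightarrow> 'b::finite"
  shows "(norm x)\<^sup>2 = (\<Sum>i\<in>UNIV. (norm (blockp blk i x))\<^sup>2)"
proof -
  have norm2: "(norm y)\<^sup>2 = (\<Sum>c\<in>UNIV. (y $ c)\<^sup>2)" for y :: "real^'c"
    by (simp add: norm_vec_def L2_set_def sum_nonneg)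
  have "(\<Sum>i\<in>UNIV. (norm (blockp blk i x))\<^sup>2)
      = (\<Sum>i\<in>UNIV. \<Sum>c\<in>UNIV. if blk c = i then (x $ c)\<^sup>2 else 0)"
    by (intro sum.cong refl) (auto simp: norm2 blockp_nth intro!: sum.cong)
  also have "\<dots> = (\<Sum>c\<in>UNIV. \<Sum>i\<in>UNIV. if blk c = i then (x $ c)\<^sup>2 else 0)"
    by (rule sum.swap)
  finally show ?thesis
    by (simp add: norm2)
qed

lemma norm_le_sqrt_sum_blockp:
  fixes blk :: "'c::finite \<Rightarrow> 'b::finite"
  assumes "\<And>i. norm (blockp blk i x) \<le> C i"
  shows "norm x \<le> sqrt (\<Sum>i\<in>UNIV. (C i)\<^sup>2)"
proof (rule real_le_rsqrt)
  show "(norm x)\<^sup>2 \<le> (\<Sum>i\<in>UNIV. (C i)\<^sup>2)"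
    unfolding power2_norm_eq_sum_blockp[of x blk] using assms by (intro sum_mono power_mono) auto
qed

lemma closed_prodset:
  assumes "\<And>i. closed (Xs i)"
  shows "closed (prodset blk Xs)"
  unfolding prodset_def
proof (rule closed_Collect_all)
  fix i
  have "isCont (blockp blk i) x" for x
    by (intro linear_continuous_at linear_conv_bounded_linear[THEN iffD1] linear_blockp)
  then have "closed (blockp blk i -` Xs i)"
    by (rule continuous_closed_vimage[OF assms])
  then show "closed {x. blockp blk i x \<in> Xs i}"
    by (simp add: vimage_def)
qed

lemma convex_prodset:
  assumes "\<And>i. convex (Xs i)"
  shows "convex (prodset blk Xs)"
  using assms by (simp add: prodset_def convex_def blockp_add blockp_scaleR)

lemma Lfun_nonneg: "(\<And>i. p i > 0) \<Longrightarrow> 0 \<le> Lfun blk p x y"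
  unfolding Lfun_def by (intro sum_nonneg) (simp add: less_imp_le)

lemma Lfun_ge_power2_norm:
  fixes blk :: "'c::finite \<Rightarrow> 'b::finite"
  assumes "0 < pmin" and "\<And>i. pmin \<le> p i"
  shows "pmin * Lfun blk p x y \<le> (norm (x - y))\<^sup>2"
proof -
  have "pmin * Lfun blk p x y = (\<Sum>i\<in>UNIV. (pmin / p i) * (norm (blockp blk i (x - y)))\<^sup>2)"
    unfolding Lfun_def by (simp add: sum_distrib_left)
  also have "\<dots> \<le> (\<Sum>i\<in>UNIV. (norm (blockp blk i (x - y)))\<^sup>2)"
  proof (intro sum_mono mult_left_le_one_le)
    fix i
    have "0 < p i"
      using assms less_le_trans by blast
    then show "0 \<le> pmin / p i" and "pmin / p i \<le> 1"
      using assms by simp_all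
  qed simp
  finally show ?thesis
    by (simp flip: power2_norm_eq_sum_blockp)
qed

lemma Lfun_triangle:
  fixes blk :: "'c::finite \<Rightarrow> 'b::finite"
  assumes p: "\<And>i. p i > 0" and c: "c > 0"
  shows "Lfun blk p x z \<le> (1 + c) * Lfun blk p x y + (1 + 1 / c) * Lfun blk p y z"
proof -
  have "1 / p i * (norm (blockp blk i (x - z)))\<^sup>2
      \<le> 1 / p i * ((1 + c) * (norm (blockp blk i (x - y)))\<^sup>2 + (1 + 1 / c) * (norm (blockp blk i (y - z)))\<^sup>2)" for i
    using power2_norm_add_le[OF c, of "blockp blk i (x - y)" "blockp blk i (y - z)"] p[of i]
    by (intro mult_left_mono) (simp_all add: blockp_add[symmetric])
  then have "Lfun blk p x z \<le> (\<Sum>i\<in>UNIV. 1 / p i * ((1 + c) * (norm (blockp blk i (x - y)))\<^sup>2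
                              + (1 + 1 / c) * (norm (blockp blk i (y - z)))\<^sup>2))"
    unfolding Lfun_def by (rule sum_mono)
  also have "\<dots> = (\<Sum>i\<in>UNIV. (1 + c) * ((1 / p i) * (norm (blockp blk i (x - y)))\<^sup>2)
                              + (1 + 1 / c) * ((1 / p i) * (norm (blockp blk i (y - z)))\<^sup>2))"
    by (intro sum.cong refl) (simp add: algebra_simps add_divide_distrib)
  also have "\<dots> = (1 + c) * Lfun blk p x y + (1 + 1 / c) * Lfun blk p y z"
    unfolding Lfun_def by (simp only: sum.distrib sum_distrib_left)
  finally show ?thesis .
qed

lemma Lfun_shift_le:
  fixes blk :: "'c::finite \<Rightarrow> 'b::finite"
  assumes p: "\<And>i. p i > 0" and c: "0 < c" "c \<le> 1"
  shows "(1 - 2 * c) * Lfun blk p x z \<le> (1 - c) * Lfun blk p x y + Lfun blk p y z / c"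
proof -
  have L_nonneg: "0 \<le> Lfun blk p u v" for u v
    using p by (rule Lfun_nonneg)
  show ?thesis
  proof (cases "1 - 2 * c \<le> 0")
    case True
    then have "(1 - 2 * c) * Lfun blk p x z \<le> 0"
      using L_nonneg by (rule mult_nonpos_nonneg)
    moreover have "0 \<le> (1 - c) * Lfun blk p x y" and "0 \<le> Lfun blk p y z / c"
      using c L_nonneg by simp_all
    ultimately show ?thesis
      by linarith
  next
    case False
    have "(1 - 2 * c) * Lfun blk p x z \<le> (1 - 2 * c) * ((1 + c) * Lfun blk p x y + (1 + 1 / c) * Lfun blk p y z)"
      using False Lfun_triangle[OF p c(1)] by (intro mult_left_mono) auto
    also have "\<dots> = ((1 - 2 * c) * (1 + c)) * Lfun blk p x y + ((1 - 2 * c) * (1 + c)) * (Lfun blk p y z / c)"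
      using c by (simp add: field_simps)
    also have "\<dots> \<le> (1 - c) * Lfun blk p x y + 1 * (Lfun blk p y z / c)"
    proof (intro add_mono mult_right_mono)
      show "(1 - 2 * c) * (1 + c) \<le> 1 - c" and "(1 - 2 * c) * (1 + c) \<le> 1"
        using c by (simp_all add: algebra_simps)
    qed (use c L_nonneg in simp_all)
    finally show ?thesis
      by simp
  qed
qed

section \<open>The regularized problem\<close>

locale regularized_problem =
  fixes X :: "'a::euclidean_space set"
    and f g :: "'a \<Rightarrow> ereal"
    and gf gg :: "'a \<Rightarrow> 'a"
    and \<mu> :: real
  assumes X_closed: "closed X" and X_convex: "convex X" and X_nonempty: "X \<noteq> {}"
    and f_proper: "proper_fun f" and f_convex: "econvex f"
    and g_proper: "proper_fun g"
    and mu_pos: "\<mu> > 0" and g_strong: "estrongly_convex \<mu> g"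
    and X_int: "X \<subseteq> interior (edom f \<inter> edom g)"
    and gf_sub: "\<And>y. y \<in> X \<Longrightarrow> gf y \<in> subdiff f y"
    and gg_sub: "\<And>y. y \<in> X \<Longrightarrow> gg y \<in> subdiff g y"
begin

definition F :: "real \<Rightarrow> 'a \<Rightarrow> real" where
  "F \<eta> y = real_of_ereal (f y) + \<eta> * real_of_ereal (g y)"

lemma finite_on_X:
  assumes "y \<in> X"
  shows "\<bar>f y\<bar> \<noteq> \<infinity>" and "\<bar>g y\<bar> \<noteq> \<infinity>"
  using assms X_int interior_subset f_proper g_proper by (auto simp: edom_def proper_fun_def)

lemma f_subgradient:
  assumes "y \<in> X" "w \<in> X"
  shows "real_of_ereal (f y) + inner (gf y) (w - y) \<le> real_of_ereal (f w)"
proof -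
  have "ereal (real_of_ereal (f y) + inner (gf y) (w - y)) \<le> f w"
    using gf_sub[OF assms(1)] by (simp add: subdiff_def)
  then show ?thesis
    using finite_on_X(1)[OF assms(2)] by (cases "f w") auto
qed

lemma g_subgradient:
  assumes "y \<in> X" "w \<in> X"
  shows "real_of_ereal (g y) + inner (gg y) (w - y) \<le> real_of_ereal (g w)"
proof -
  have "ereal (real_of_ereal (g y) + inner (gg y) (w - y)) \<le> g w"
    using gg_sub[OF assms(1)] by (simp add: subdiff_def)
  then show ?thesis
    using finite_on_X(2)[OF assms(2)] by (cases "g w") auto
qed

lemma F_subgradient:
  assumes "0 \<le> \<eta>" "y \<in> X" "w \<in> X"
  shows "F \<eta> y + inner (gf y + \<eta> *\<^sub>R gg y) (w - y) \<le> F \<eta> w"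
  using f_subgradient[OF assms(2,3)] mult_left_mono[OF g_subgradient[OF assms(2,3)] assms(1)]
  by (simp add: F_def inner_add_left algebra_simps)

lemma F_strongly_convex:
  assumes "0 \<le> \<eta>"
  shows "convex_on X (\<lambda>x. F \<eta> x - \<eta> * \<mu> / 2 * (norm x)\<^sup>2)"
proof -
  have "X \<subseteq> edom f" "X \<subseteq> edom g"
    using X_int interior_subset by blast+
  then have "convex_on X (\<lambda>x. real_of_ereal (f x))"
    and "convex_on X (\<lambda>x. real_of_ereal (g x) - \<mu> / 2 * (norm x)\<^sup>2)"
    using f_convex g_strong X_convex unfolding econvex_def estrongly_convex_def
    by (blast intro: convex_on_subset)+
  then have "convex_on X (\<lambda>x. real_of_ereal (f x) + \<eta> * (real_of_ereal (g x) - \<mu> / 2 * (norm x)\<^sup>2))"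
    using assms by (intro convex_on_add convex_on_cmul)
  then show ?thesis
    by (simp add: F_def algebra_simps)
qed

lemma continuous_on_F: "continuous_on X (F \<eta>)"
proof -
  let ?U = "interior (edom f \<inter> edom g)"
  have U: "open ?U" "convex ?U" "?U \<subseteq> edom f" "?U \<subseteq> edom g"
    using f_convex g_strong interior_subset unfolding econvex_def estrongly_convex_def
    by (auto intro: convex_interior convex_Int)
  have "continuous_on ?U (\<lambda>x. real_of_ereal (f x))"
    using f_convex U unfolding econvex_def by (metis convex_on_subset convex_on_continuous)
  moreover have "continuous_on ?U (\<lambda>x. real_of_ereal (g x) - \<mu> / 2 * (norm x)\<^sup>2)"
    using g_strong U unfolding estrongly_convex_def by (metis convex_on_subset convex_on_continuous)
  then have "continuous_on ?U (\<lambda>x. (real_of_ereal (g x) - \<mu> / 2 * (norm x)\<^sup>2) + \<mu> / 2 * (norm x)\<^sup>2)"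
    by (rule continuous_on_add) (intro continuous_intros)
  ultimately have "continuous_on ?U (F \<eta>)"
    unfolding F_def[abs_def] by (auto intro: continuous_on_add continuous_on_mult_left)
  then show ?thesis
    using X_int by (rule continuous_on_subset)
qed

lemma regmin_minimizes:
  assumes "0 < \<eta>"
  shows "regmin f g X \<eta> \<in> X" and "\<And>y. y \<in> X \<Longrightarrow> F \<eta> (regmin f g X \<eta>) \<le> F \<eta> y"
proof -
  have cv: "convex_on X (\<lambda>x. F \<eta> x - (\<eta> * \<mu>) / 2 * (norm x)\<^sup>2)"
    using F_strongly_convex assms by simp
  obtain x0 where x0: "x0 \<in> X"
    using X_nonempty by blast
  have "\<exists>z\<in>X. \<forall>y\<in>X. F \<eta> z \<le> F \<eta> y"
    using assms mu_pos x0 F_subgradient[of \<eta> x0]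
    by (intro strongly_convex_on_attains_min[OF X_closed continuous_on_F _ cv]) auto
  moreover have "z1 = z2" if "z1 \<in> X" "\<forall>y\<in>X. F \<eta> z1 \<le> F \<eta> y" "z2 \<in> X" "\<forall>y\<in>X. F \<eta> z2 \<le> F \<eta> y"
    for z1 z2
    using that assms mu_pos by (intro strongly_convex_on_min_unique[OF cv]) auto
  ultimately have unique: "\<exists>!z. z \<in> X \<and> (\<forall>y\<in>X. F \<eta> z \<le> F \<eta> y)"
    by blast
  have F_iff: "(z \<in> X \<and> (\<forall>y\<in>X. f z + ereal \<eta> * g z \<le> f y + ereal \<eta> * g y))
      \<longleftrightarrow> (z \<in> X \<and> (\<forall>y\<in>X. F \<eta> z \<le> F \<eta> y))" for z
  proof -
    have "f y + ereal \<eta> * g y = ereal (F \<eta> y)" if "y \<in> X" for y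
      using finite_on_X[OF that] by (cases "f y"; cases "g y") (auto simp: F_def)
    then show ?thesis
      by auto
  qed
  have "regmin f g X \<eta> \<in> X \<and> (\<forall>y\<in>X. F \<eta> (regmin f g X \<eta>) \<le> F \<eta> y)"
    unfolding regmin_def F_iff by (rule theI'[OF unique])
  then show "regmin f g X \<eta> \<in> X" and "\<And>y. y \<in> X \<Longrightarrow> F \<eta> (regmin f g X \<eta>) \<le> F \<eta> y"
    by auto
qed

lemma min_growth_regmin:
  assumes "0 < \<eta>" "x \<in> X"
  shows "\<eta> * \<mu> / 2 * (norm (x - regmin f g X \<eta>))\<^sup>2 \<le> F \<eta> x - F \<eta> (regmin f g X \<eta>)"
  using assms regmin_minimizes[OF assms(1)]
  by (intro strongly_convex_on_min_growth[OF F_strongly_convex]) auto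

text \<open>Adding the quadratic-growth inequalities of \<open>F \<eta>\<close> and \<open>F \<eta>'\<close> at their minimizers
  leaves only \<open>\<eta> - \<eta>'\<close> times a difference of values of \<open>g\<close>, which the subgradient bound
  controls.\<close>

lemma regmin_diff_quadratic_le:
  assumes "0 < \<eta>'" "\<eta>' \<le> \<eta>" and gg_bound: "\<And>y. y \<in> X \<Longrightarrow> norm (gg y) \<le> C"
  defines "d \<equiv> norm (regmin f g X \<eta> - regmin f g X \<eta>')"
  shows "\<eta>' * \<mu> * d\<^sup>2 \<le> (\<eta> - \<eta>') * C * d"
proof -
  define z where "z = regmin f g X \<eta>'"
  define z' where "z' = regmin f g X \<eta>"
  have "0 < \<eta>"
    using assms by simp
  have z: "z \<in> X" and z': "z' \<in> X"
    unfolding z_def z'_def using regmin_minimizes assms \<open>0 < \<eta>\<close> by blast+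
  have "\<eta> * \<mu> / 2 * d\<^sup>2 \<le> F \<eta> z - F \<eta> z'"
    using min_growth_regmin[OF \<open>0 < \<eta>\<close> z] by (simp add: z_def z'_def d_def norm_minus_commute)
  moreover have "\<eta>' * \<mu> / 2 * d\<^sup>2 \<le> F \<eta>' z' - F \<eta>' z"
    using min_growth_regmin[OF assms(1) z'] by (simp add: z_def z'_def d_def)
  moreover have "\<eta>' * \<mu> / 2 * d\<^sup>2 \<le> \<eta> * \<mu> / 2 * d\<^sup>2"
    using assms mu_pos by (intro mult_right_mono) auto
  moreover have "F \<eta> z - F \<eta> z' + (F \<eta>' z' - F \<eta>' z)
      = (\<eta> - \<eta>') * (real_of_ereal (g z) - real_of_ereal (g z'))"
    by (simp add: F_def algebra_simps)
  moreover have "real_of_ereal (g z) - real_of_ereal (g z') \<le> C * d"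
  proof -
    have "real_of_ereal (g z) - real_of_ereal (g z') \<le> inner (gg z) (z - z')"
      using g_subgradient[OF z z'] by (simp add: inner_diff_right)
    also have "\<dots> \<le> norm (gg z) * d"
      using norm_cauchy_schwarz[of "gg z" "z - z'"]
      by (simp add: z_def z'_def d_def norm_minus_commute)
    also have "\<dots> \<le> C * d"
      using gg_bound[OF z] by (simp add: d_def mult_right_mono)
    finally show ?thesis .
  qed
  then have "(\<eta> - \<eta>') * (real_of_ereal (g z) - real_of_ereal (g z')) \<le> (\<eta> - \<eta>') * (C * d)"
    using assms by (intro mult_left_mono) auto
  ultimately show ?thesis
    by (simp add: power2_eq_square algebra_simps)
qed

lemma norm_regmin_diff_le:
  assumes "0 < \<eta>'" "\<eta>' \<le> \<eta>" and gg_bound: "\<And>y. y \<in> X \<Longrightarrow> norm (gg y) \<le> C"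
  shows "norm (regmin f g X \<eta> - regmin f g X \<eta>') \<le> C / \<mu> * (\<eta> / \<eta>' - 1)"
proof -
  define d where "d = norm (regmin f g X \<eta> - regmin f g X \<eta>')"
  have key: "\<eta>' * \<mu> * d * d \<le> (\<eta> - \<eta>') * C * d"
    using regmin_diff_quadratic_le[OF assms] by (simp add: d_def power2_eq_square)
  have "0 \<le> C"
    using gg_bound X_nonempty norm_ge_zero order_trans by blast
  show ?thesis
  proof (cases "d = 0")
    case True
    then show ?thesis
      using \<open>0 \<le> C\<close> assms mu_pos by (simp add: d_def field_simps mult_left_mono)
  next
    case False
    then have "\<eta>' * \<mu> * d \<le> (\<eta> - \<eta>') * C"
      using key by (simp add: d_def)
    then show ?thesis
      using assms mu_pos by (simp add: d_def field_simps)
  qed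
qed

lemma regmin_inner_ge:
  assumes "0 < \<eta>" "x \<in> X"
  shows "\<eta> * \<mu> * (norm (x - regmin f g X \<eta>))\<^sup>2 \<le> inner (gf x + \<eta> *\<^sub>R gg x) (x - regmin f g X \<eta>)"
proof -
  define z where "z = regmin f g X \<eta>"
  have z: "z \<in> X"
    unfolding z_def using regmin_minimizes assms by blast
  have "F \<eta> x + inner (gf x + \<eta> *\<^sub>R gg x) (z - x) + \<eta> * \<mu> / 2 * (norm (z - x))\<^sup>2 \<le> F \<eta> z"
    using assms z F_subgradient[of \<eta> x]
    by (intro strongly_convex_on_subgradient[OF F_strongly_convex]) auto
  moreover have "\<eta> * \<mu> / 2 * (norm (x - z))\<^sup>2 \<le> F \<eta> x - F \<eta> z"
    unfolding z_def using assms by (rule min_growth_regmin)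
  ultimately show ?thesis
    by (simp add: z_def[symmetric] norm_minus_commute inner_diff_right)
qed

end

section \<open>One step of the block method\<close>

lemma rb_iter_cong:
  assumes "\<And>j. j < n \<Longrightarrow> \<omega> j = \<omega>' j"
  shows "rb_iter blk Xs gf gg gam eta x0 \<omega> n = rb_iter blk Xs gf gg gam eta x0 \<omega>' n"
  using assms by (induction n) auto

lemma rb_iter_fun_upd_Suc:
  "rb_iter blk Xs gf gg gam eta x0 (fun_upd \<omega> k i) (Suc k)
     = rb_step blk Xs gf gg (gam k) (eta k) i (rb_iter blk Xs gf gg gam eta x0 \<omega> k)"
proof -
  have "rb_iter blk Xs gf gg gam eta x0 (fun_upd \<omega> k i) k = rb_iter blk Xs gf gg gam eta x0 \<omega> k"
    by (rule rb_iter_cong) simp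
  then show ?thesis
    by simp
qed

locale block_regularized_problem = regularized_problem "prodset blk Xs" f g gf gg \<mu>
  for blk :: "'c::finite \<Rightarrow> 'b::finite" and Xs :: "'b \<Rightarrow> (real^'c) set" and f g gf gg \<mu> +
  assumes Xs_block: "\<And>i. Xs i \<subseteq> {y. blockp blk i y = y}"
    and Xs_nonempty: "\<And>i. Xs i \<noteq> {}"
    and Xs_closed: "\<And>i. closed (Xs i)"
    and Xs_convex: "\<And>i. convex (Xs i)"
begin

lemma blockp_rb_step:
  "blockp blk j (rb_step blk Xs gf gg \<gamma> \<eta> i x) =
     (if j = i then closest_point (Xs i) (blockp blk i (x - \<gamma> *\<^sub>R (gf x + \<eta> *\<^sub>R gg x)))
      else blockp blk j x)"
proof -
  define q where "q = closest_point (Xs i) (blockp blk i (x - \<gamma> *\<^sub>R (gf x + \<eta> *\<^sub>R gg x)))"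
  have "q \<in> Xs i"
    unfolding q_def by (rule closest_point_in_set[OF Xs_closed Xs_nonempty])
  then have "blockp blk i q = q"
    using Xs_block by blast
  then have "blockp blk j q = (if j = i then q else 0)"
    by (metis blockp_blockp)
  then show ?thesis
    unfolding rb_step_def q_def[symmetric] by (simp add: blockp_add blockp_diff blockp_blockp)
qed

lemma rb_step_in_prodset: "x \<in> prodset blk Xs \<Longrightarrow> rb_step blk Xs gf gg \<gamma> \<eta> i x \<in> prodset blk Xs"
  using closest_point_in_set[OF Xs_closed Xs_nonempty] by (auto simp: prodset_def blockp_rb_step)

lemma rb_iter_in_prodset: "x0 \<in> prodset blk Xs \<Longrightarrow> rb_iter blk Xs gf gg gam eta x0 \<omega> n \<in> prodset blk Xs"
  by (induction n) (simp_all add: rb_step_in_prodset)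

lemma expected_Lfun_rb_step:
  assumes p: "\<And>i. p i > 0" "(\<Sum>i\<in>UNIV. p i) = 1" and z: "z \<in> prodset blk Xs"
  shows "(\<Sum>i\<in>UNIV. p i * Lfun blk p (rb_step blk Xs gf gg \<gamma> \<eta> i x) z)
         \<le> Lfun blk p x z + (norm (x - \<gamma> *\<^sub>R (gf x + \<eta> *\<^sub>R gg x) - z))\<^sup>2 - (norm (x - z))\<^sup>2"
proof -
  define u where "u = x - \<gamma> *\<^sub>R (gf x + \<eta> *\<^sub>R gg x)"
  define n where "n i = (norm (blockp blk i (x - z)))\<^sup>2" for i
  define n' where "n' i = (norm (closest_point (Xs i) (blockp blk i u) - blockp blk i z))\<^sup>2" for i
  have "Lfun blk p (rb_step blk Xs gf gg \<gamma> \<eta> i x) z = Lfun blk p x z + (n' i - n i) / p i" for i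
  proof -
    have "Lfun blk p (rb_step blk Xs gf gg \<gamma> \<eta> i x) z
        = (\<Sum>j\<in>UNIV. n j / p j + (if j = i then (n' i - n i) / p i else 0))"
      unfolding Lfun_def
      by (intro sum.cong refl) (auto simp: blockp_diff blockp_rb_step n_def n'_def u_def diff_divide_distrib)
    then show ?thesis
      by (simp add: sum.distrib Lfun_def n_def)
  qed
  then have "(\<Sum>i\<in>UNIV. p i * Lfun blk p (rb_step blk Xs gf gg \<gamma> \<eta> i x) z)
      = (\<Sum>i\<in>UNIV. p i * Lfun blk p x z + (n' i - n i))"
    using p(1) by (intro sum.cong refl) (simp add: distrib_left less_imp_neq[symmetric])
  also have "\<dots> = Lfun blk p x z + (\<Sum>i\<in>UNIV. n' i) - (\<Sum>i\<in>UNIV. n i)"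
    by (simp add: sum.distrib sum_subtractf p(2) flip: sum_distrib_right)
  also have "\<dots> \<le> Lfun blk p x z + (\<Sum>i\<in>UNIV. (norm (blockp blk i (u - z)))\<^sup>2) - (\<Sum>i\<in>UNIV. n i)"
  proof -
    have "n' i \<le> (norm (blockp blk i (u - z)))\<^sup>2" for i
    proof -
      have "blockp blk i z \<in> Xs i"
        using z by (simp add: prodset_def)
      then have "dist (closest_point (Xs i) (blockp blk i u)) (blockp blk i z)
          \<le> dist (blockp blk i u) (blockp blk i z)"
        using closest_point_lipschitz[OF Xs_convex Xs_closed Xs_nonempty] closest_point_self
        by metis
      then show ?thesis
        unfolding n'_def by (simp add: dist_norm blockp_diff power_mono)
    qed
    then show ?thesis
      by (simp add: sum_mono)
  qed
  also have "\<dots> = Lfun blk p x z + (norm (u - z))\<^sup>2 - (norm (x - z))\<^sup>2"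
    unfolding n_def by (simp flip: power2_norm_eq_sum_blockp)
  finally show ?thesis
    unfolding u_def .
qed

lemma expected_Lfun_rb_step_contract:
  assumes p: "\<And>i. p i > 0" "(\<Sum>i\<in>UNIV. p i) = 1" "0 < pmin" "\<And>i. pmin \<le> p i"
    and x: "x \<in> prodset blk Xs" and "0 < \<gamma>" "0 < \<eta>" "\<eta> \<le> \<eta>0"
    and gf_bound: "\<And>y. y \<in> prodset blk Xs \<Longrightarrow> norm (gf y) \<le> CF"
    and gg_bound: "\<And>y. y \<in> prodset blk Xs \<Longrightarrow> norm (gg y) \<le> CG"
  shows "(\<Sum>i\<in>UNIV. p i * Lfun blk p (rb_step blk Xs gf gg \<gamma> \<eta> i x) (regmin f g (prodset blk Xs) \<eta>))
         \<le> (1 - 2 * (\<mu> * \<gamma> * \<eta> * pmin)) * Lfun blk p x (regmin f g (prodset blk Xs) \<eta>)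
           + 2 * \<gamma>\<^sup>2 * (CF\<^sup>2 + \<eta>0\<^sup>2 * CG\<^sup>2)"
proof -
  define z where "z = regmin f g (prodset blk Xs) \<eta>"
  define v where "v = gf x + \<eta> *\<^sub>R gg x"
  have z: "z \<in> prodset blk Xs"
    unfolding z_def using regmin_minimizes \<open>0 < \<eta>\<close> by blast
  define D where "D = (norm (x - z))\<^sup>2"
  define K where "K = 2 * (CF\<^sup>2 + \<eta>0\<^sup>2 * CG\<^sup>2)"
  have step: "(norm (x - \<gamma> *\<^sub>R v - z))\<^sup>2 = D - 2 * \<gamma> * inner v (x - z) + \<gamma>\<^sup>2 * (norm v)\<^sup>2"
    unfolding D_def power2_norm_eq_inner
    by (simp add: inner_diff_left inner_diff_right inner_commute power2_eq_square algebra_simps)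
  have "\<eta> * \<mu> * D \<le> inner v (x - z)"
    unfolding D_def z_def v_def using \<open>0 < \<eta>\<close> x by (rule regmin_inner_ge)
  then have descent: "2 * \<gamma> * (\<eta> * \<mu> * D) \<le> 2 * \<gamma> * inner v (x - z)"
    using \<open>0 < \<gamma>\<close> by simp
  have "(norm v)\<^sup>2 \<le> K"
  proof -
    have "(norm (gf x))\<^sup>2 \<le> CF\<^sup>2"
      using gf_bound[OF x] by (simp add: power_mono)
    moreover have "(norm (\<eta> *\<^sub>R gg x))\<^sup>2 \<le> \<eta>0\<^sup>2 * CG\<^sup>2"
      using gg_bound[OF x] \<open>0 < \<eta>\<close> \<open>\<eta> \<le> \<eta>0\<close>
      by (simp add: power_mult_distrib mult_mono power_mono)
    ultimately show ?thesis
      using power2_norm_add_le[of 1 "gf x" "\<eta> *\<^sub>R gg x"] by (simp add: v_def K_def)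
  qed
  then have gradient: "\<gamma>\<^sup>2 * (norm v)\<^sup>2 \<le> \<gamma>\<^sup>2 * K"
    by (simp add: mult_left_mono)
  have "pmin * Lfun blk p x z \<le> D"
    unfolding D_def using p(3,4) by (rule Lfun_ge_power2_norm)
  then have "2 * (\<mu> * \<gamma> * \<eta> * pmin) * Lfun blk p x z \<le> 2 * \<gamma> * (\<eta> * \<mu> * D)"
    using \<open>0 < \<gamma>\<close> \<open>0 < \<eta>\<close> mu_pos by (simp add: mult_left_mono algebra_simps)
  with step descent gradient
  have "Lfun blk p x z + (norm (x - \<gamma> *\<^sub>R v - z))\<^sup>2 - D
      \<le> (1 - 2 * (\<mu> * \<gamma> * \<eta> * pmin)) * Lfun blk p x z + 2 * \<gamma>\<^sup>2 * (CF\<^sup>2 + \<eta>0\<^sup>2 * CG\<^sup>2)"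
    by (simp add: K_def algebra_simps)
  then show ?thesis
    using expected_Lfun_rb_step[OF p(1,2) z, where x = x and \<gamma> = \<gamma> and \<eta> = \<eta>] by (simp add: z_def v_def D_def)
qed

lemma expected_Lfun_rb_step_le:
  assumes p: "\<And>i. p i > 0" "(\<Sum>i\<in>UNIV. p i) = 1" "0 < pmin" "\<And>i. pmin \<le> p i"
    and x: "x \<in> prodset blk Xs" and "0 < \<gamma>" "0 < \<eta>" "\<eta> \<le> \<eta>'" "\<eta> \<le> \<eta>0"
    and gf_bound: "\<And>y. y \<in> prodset blk Xs \<Longrightarrow> norm (gf y) \<le> CF"
    and gg_bound: "\<And>y. y \<in> prodset blk Xs \<Longrightarrow> norm (gg y) \<le> CG"
    and c_le: "\<mu> * \<gamma> * \<eta> * pmin \<le> 1"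
  shows "(\<Sum>i\<in>UNIV. p i * Lfun blk p (rb_step blk Xs gf gg \<gamma> \<eta> i x) (regmin f g (prodset blk Xs) \<eta>))
         \<le> (1 - \<mu> * \<gamma> * \<eta> * pmin) * Lfun blk p x (regmin f g (prodset blk Xs) \<eta>')
           + 2 * CG\<^sup>2 / (pmin\<^sup>2 * \<mu> ^ 3 * \<gamma> * \<eta>) * (\<eta>' / \<eta> - 1)\<^sup>2
           + 2 * \<gamma>\<^sup>2 * (CF\<^sup>2 + \<eta>0\<^sup>2 * CG\<^sup>2)"
proof -
  define c where "c = \<mu> * \<gamma> * \<eta> * pmin"
  define z where "z = regmin f g (prodset blk Xs) \<eta>"
  define z' where "z' = regmin f g (prodset blk Xs) \<eta>'"
  define E where "E = CG\<^sup>2 / (pmin\<^sup>2 * \<mu> ^ 3 * \<gamma> * \<eta>) * (\<eta>' / \<eta> - 1)\<^sup>2"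
  have "0 < c"
    using mu_pos \<open>0 < \<gamma>\<close> \<open>0 < \<eta>\<close> p(3) by (simp add: c_def)
  have "Lfun blk p z' z / c \<le> E"
  proof -
    have "pmin * Lfun blk p z' z \<le> (norm (z' - z))\<^sup>2"
      using p(3,4) by (rule Lfun_ge_power2_norm)
    also have "\<dots> \<le> (CG / \<mu> * (\<eta>' / \<eta> - 1))\<^sup>2"
      unfolding z_def z'_def using \<open>0 < \<eta>\<close> \<open>\<eta> \<le> \<eta>'\<close> gg_bound
      by (intro power_mono norm_regmin_diff_le) auto
    finally have "Lfun blk p z' z \<le> (CG / \<mu> * (\<eta>' / \<eta> - 1))\<^sup>2 / pmin"
      using p(3) by (simp add: pos_le_divide_eq mult.commute)
    then have "Lfun blk p z' z / c \<le> (CG / \<mu> * (\<eta>' / \<eta> - 1))\<^sup>2 / pmin / c"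
      using \<open>0 < c\<close> by (rule divide_right_mono[OF _ less_imp_le])
    also have "\<dots> = E"
      using p(3) mu_pos \<open>0 < \<gamma>\<close> \<open>0 < \<eta>\<close>
      by (simp add: E_def c_def field_simps power2_eq_square power3_eq_cube)
    finally show ?thesis .
  qed
  moreover have "0 \<le> E"
    using p(3) mu_pos \<open>0 < \<gamma>\<close> \<open>0 < \<eta>\<close> by (simp add: E_def)
  moreover have "(1 - 2 * c) * Lfun blk p x z \<le> (1 - c) * Lfun blk p x z' + Lfun blk p z' z / c"
    using p(1) \<open>0 < c\<close> c_le unfolding c_def by (rule Lfun_shift_le)
  moreover have "(\<Sum>i\<in>UNIV. p i * Lfun blk p (rb_step blk Xs gf gg \<gamma> \<eta> i x) z)
      \<le> (1 - 2 * c) * Lfun blk p x z + 2 * \<gamma>\<^sup>2 * (CF\<^sup>2 + \<eta>0\<^sup>2 * CG\<^sup>2)"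
    unfolding z_def c_def using p x \<open>0 < \<gamma>\<close> \<open>0 < \<eta>\<close> \<open>\<eta> \<le> \<eta>0\<close> gf_bound gg_bound
    by (rule expected_Lfun_rb_step_contract)
  ultimately have "(\<Sum>i\<in>UNIV. p i * Lfun blk p (rb_step blk Xs gf gg \<gamma> \<eta> i x) z)
      \<le> (1 - c) * Lfun blk p x z' + 2 * E + 2 * \<gamma>\<^sup>2 * (CF\<^sup>2 + \<eta>0\<^sup>2 * CG\<^sup>2)"
    by linarith
  then show ?thesis
    by (simp add: z_def z'_def c_def E_def)
qed

lemma cond_exp_Lfun_rb_iter_le:
  fixes P :: "'b pmf"
  assumes P: "\<And>i. pmf P i > 0" and x0: "x0 \<in> prodset blk Xs"
    and "0 < gam k" "0 < eta k" "eta k \<le> \<eta>'" "eta k \<le> \<eta>0"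
    and gf_bound: "\<And>y. y \<in> prodset blk Xs \<Longrightarrow> norm (gf y) \<le> CF"
    and gg_bound: "\<And>y. y \<in> prodset blk Xs \<Longrightarrow> norm (gg y) \<le> CG"
    and c_le: "\<mu> * gam k * eta k * Min (range (pmf P)) \<le> 1"
  shows "AE \<omega> in idx_space P.
           real_cond_exp (idx_space P) (idx_filt P k) (\<lambda>\<omega>. Lfun blk (pmf P)
              (rb_iter blk Xs gf gg gam eta x0 \<omega> (Suc k)) (regmin f g (prodset blk Xs) (eta k))) \<omega>
         \<le> (1 - \<mu> * gam k * eta k * Min (range (pmf P)))
              * Lfun blk (pmf P) (rb_iter blk Xs gf gg gam eta x0 \<omega> k) (regmin f g (prodset blk Xs) \<eta>')
           + 2 * CG\<^sup>2 / ((Min (range (pmf P)))\<^sup>2 * \<mu> ^ 3 * gam k * eta k) * (\<eta>' / eta k - 1)\<^sup>2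
           + 2 * (gam k)\<^sup>2 * (CF\<^sup>2 + \<eta>0\<^sup>2 * CG\<^sup>2)"
proof -
  let ?x = "rb_iter blk Xs gf gg gam eta x0"
  have "AE \<omega> in idx_space P.
          real_cond_exp (idx_space P) (idx_filt P k)
            (\<lambda>\<omega>. Lfun blk (pmf P) (?x \<omega> (Suc k)) (regmin f g (prodset blk Xs) (eta k))) \<omega>
        = (\<Sum>i\<in>UNIV. pmf P i * Lfun blk (pmf P) (?x (fun_upd \<omega> k i) (Suc k))
                                               (regmin f g (prodset blk Xs) (eta k)))"
    by (rule real_cond_exp_idx_filt) (metis rb_iter_cong less_Suc_eq_le)
  moreover have "(\<Sum>i\<in>UNIV. pmf P i * Lfun blk (pmf P) (?x (fun_upd \<omega> k i) (Suc k))
                                         (regmin f g (prodset blk Xs) (eta k)))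
      \<le> (1 - \<mu> * gam k * eta k * Min (range (pmf P)))
              * Lfun blk (pmf P) (?x \<omega> k) (regmin f g (prodset blk Xs) \<eta>')
           + 2 * CG\<^sup>2 / ((Min (range (pmf P)))\<^sup>2 * \<mu> ^ 3 * gam k * eta k) * (\<eta>' / eta k - 1)\<^sup>2
           + 2 * (gam k)\<^sup>2 * (CF\<^sup>2 + \<eta>0\<^sup>2 * CG\<^sup>2)" for \<omega>
    unfolding rb_iter_fun_upd_Suc
    using P Min_range_pmf[OF P] sum_pmf_eq_1[of UNIV P] rb_iter_in_prodset[OF x0] assms(3-6)
      gf_bound gg_bound c_le
    by (intro expected_Lfun_rb_step_le) auto
  ultimately show ?thesis
    by (auto elim: eventually_mono)
qed

end

theorem lemma4:
  fixes blk :: "'c::finite \<Rightarrow> 'b::finite"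
    and Xs :: "'b \<Rightarrow> (real^'c) set"
    and f g :: "real^'c \<Rightarrow> ereal"
    and gf gg :: "real^'c \<Rightarrow> real^'c"
    and Cf Cg :: "'b \<Rightarrow> real"
    and P :: "'b pmf"
    and \<mu> :: real
    and gam eta :: "nat \<Rightarrow> real"
    and x0 :: "real^'c"
    and k :: nat
  defines "X \<equiv> prodset blk Xs"
    and "p \<equiv> (\<lambda>i. pmf P i)"
    and "pmin \<equiv> Min (range (\<lambda>i. pmf P i))"
    and "CF \<equiv> sqrt (\<Sum>i\<in>UNIV. (Cf i)\<^sup>2)"
    and "CG \<equiv> sqrt (\<Sum>i\<in>UNIV. (Cg i)\<^sup>2)"
    and "xs \<equiv> regmin f g (prodset blk Xs)"
    and "x \<equiv> rb_iter blk Xs gf gg gam eta x0"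
  assumes Xs_block: "\<And>i. Xs i \<subseteq> {y. blockp blk i y = y}"
    and Xs_ne: "\<And>i. Xs i \<noteq> {}"
    and Xs_closed: "\<And>i. closed (Xs i)"
    and Xs_convex: "\<And>i. convex (Xs i)"
    and f_proper: "proper_fun f" and f_convex: "econvex f"
    and g_proper: "proper_fun g" and g_convex: "econvex g"
    and mu_pos: "\<mu> > 0" and g_strong: "estrongly_convex \<mu> g"
    and X_int: "X \<subseteq> interior (edom f \<inter> edom g)"
    and gf_sub: "\<And>y. y \<in> X \<Longrightarrow> gf y \<in> subdiff f y"
    and gg_sub: "\<And>y. y \<in> X \<Longrightarrow> gg y \<in> subdiff g y"
    and Cf_bound: "\<And>y i. y \<in> X \<Longrightarrow> norm (blockp blk i (gf y)) \<le> Cf i"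
    and Cg_bound: "\<And>y i. y \<in> X \<Longrightarrow> norm (blockp blk i (gg y)) \<le> Cg i"
    and p_pos: "\<And>i. pmf P i > 0"
    and x0_in: "x0 \<in> X"
    and gam_pos: "\<And>j. gam j > 0" and gam_noninc: "\<And>j. gam (Suc j) \<le> gam j"
    and eta_pos: "\<And>j. eta j > 0" and eta_noninc: "\<And>j. eta (Suc j) \<le> eta j"
    and step0: "gam 0 * eta 0 < 1 / (\<mu> * pmin)"
    and k_ge: "k \<ge> 1"
  shows "AE \<omega> in idx_space P.
           real_cond_exp (idx_space P) (idx_filt P k)
              (\<lambda>\<omega>. Lfun blk p (x \<omega> (Suc k)) (xs (eta k))) \<omega>
         \<le> (1 - \<mu> * gam k * eta k * pmin) * Lfun blk p (x \<omega> k) (xs (eta (k - 1)))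
           + 2 * CG\<^sup>2 / (pmin\<^sup>2 * \<mu> ^ 3 * gam k * eta k) * (eta (k - 1) / eta k - 1)\<^sup>2
           + 2 * (gam k)\<^sup>2 * (CF\<^sup>2 + (eta 0)\<^sup>2 * CG\<^sup>2)"
proof -
  interpret block_regularized_problem blk Xs f g gf gg \<mu>
    using Xs_block Xs_ne Xs_closed Xs_convex f_proper f_convex g_proper mu_pos g_strong
      X_int gf_sub gg_sub x0_in
    by unfold_locales (auto simp: X_def closed_prodset convex_prodset)
  have "decseq gam" "decseq eta"
    using gam_noninc eta_noninc by (simp_all add: decseq_SucI)
  then have eta_le: "eta k \<le> eta (k - 1)" "eta k \<le> eta 0" and "gam k \<le> gam 0"
    by (simp_all add: decseqD)
  have "0 < pmin"
    using Min_range_pmf(1)[OF p_pos] by (simp add: pmin_def)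
  have "\<mu> * gam k * eta k * pmin \<le> \<mu> * pmin * (gam 0 * eta 0)"
    using \<open>gam k \<le> gam 0\<close> eta_le gam_pos eta_pos mu_pos \<open>0 < pmin\<close>
    by (simp add: mult_mono mult_left_mono less_imp_le mult_ac)
  also have "\<dots> \<le> 1"
    using step0 mu_pos \<open>0 < pmin\<close> by (simp add: field_simps)
  finally have "\<mu> * gam k * eta k * pmin \<le> 1" .
  moreover have "norm (gf y) \<le> CF" "norm (gg y) \<le> CG" if "y \<in> X" for y
    unfolding CF_def CG_def using that by (auto intro!: norm_le_sqrt_sum_blockp Cf_bound Cg_bound)
  ultimately show ?thesis
    unfolding p_def pmin_def xs_def x_def
    using p_pos x0_in gam_pos eta_pos eta_le
    by (intro cond_exp_Lfun_rb_iter_le) (auto simp: X_def)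
qed

end
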